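(* Let $\mathcal{H}$ be a complex Hilbert space and let $A\in\mathcal{B}(\mathcal{H})$ be a positive operator with $\dim R(A)\ge 2$. Let $T\in\mathcal{B}_A(\mathcal{H})$ and let $q\in\mathbb{C}$ with $0<|q|\le 1$. Then \[ \frac{|q|^2}{4}\,\big\|T^{\sharp_A}T+TT^{\sharp_A}\big\|_A\;\le\; w_{q,A}^2(T)\;\le\;\frac{2-|q|^2+4|q|\sqrt{1-|q|^2}}{2}\,\big\|TT^{\sharp_A}+T^{\sharp_A}T\big\|_A . \]
   Context: $A$ induces the semi-inner product $\langle x,y\rangle_A=\langle Ax,y\rangle$ and seminorm $\|x\|_A=\sqrt{\langle x,x\rangle_A}$. For an operator $S$, $\|S\|_A=\sup\{\|Sx\|_A/\|x\|_A : x\in\overline{R(A)},\,x\neq 0\}$. An operator $W$ is an $A$-adjoint of $T$ if $\langle Tx,y\rangle_A=\langle x,Wy\rangle_A$ for all $x,y$; $\mathcal{B}_A(\mathcal{H})$ is the set of operators admitting an $A$-adjoint, and for $T\in\mathcal{B}_A(\mathcal{H})$, $T^{\sharp_A}$ denotes the unique solution $X$ of $AX=T^*A$ with $R(X)\subseteq \overline{R(A)}$ (the reduced solution). For $q$ with $|q|\le1$, the $A$-$q$-numerical radius is $w_{q,A}(T)=\sup\{|\langle Tx,y\rangle_A| : \|x\|_A=\|y\|_A=1,\ \langle x,y\rangle_A=q\}$. *)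

theory Defs
  imports "HOL-Analysis.Analysis"
begin

text \<open>The inner
 product is linear in the first and conjugate-linear in the second argument.\<close>

class complex_vector = real_vector +
  fixes scaleC :: "complex \<Rightarrow> 'a \<Rightarrow> 'a"  (infixr \<open>*\<^sub>C\<close> 75)
  assumes scaleC_add_right: "a *\<^sub>C (x + y) = a *\<^sub>C x + a *\<^sub>C y"
    and scaleC_add_left: "(a + b) *\<^sub>C x = a *\<^sub>C x + b *\<^sub>C x"
    and scaleC_scaleC: "a *\<^sub>C (b *\<^sub>C x) = (a * b) *\<^sub>C x"
    and scaleC_one: "1 *\<^sub>C x = x"
    and scaleR_scaleC: "scaleR r x = complex_of_real r *\<^sub>C x"

class complex_inner = complex_vector + real_normed_vector +
  fixes cinner :: "'a \<Rightarrow> 'a \<Rightarrow> complex"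
  assumes cinner_commute: "cinner x y = cnj (cinner y x)"
    and cinner_add_left: "cinner (x + y) z = cinner x z + cinner y z"
    and cinner_scaleC_left: "cinner (r *\<^sub>C x) y = r * cinner x y"
    and cinner_ge_zero: "0 \<le> Re (cinner x x)"
    and cinner_eq_zero_iff: "cinner x x = 0 \<longleftrightarrow> x = 0"
    and norm_eq_sqrt_cinner: "norm x = sqrt (Re (cinner x x))"

class chilbert_space = complex_inner + complete_space

definition bounded_clinear :: "('a::complex_inner \<Rightarrow> 'a) \<Rightarrow> bool" where
  "bounded_clinear T \<longleftrightarrow>
     (\<forall>x y. T (x + y) = T x + T y) \<and> (\<forall>c x. T (c *\<^sub>C x) = c *\<^sub>C T x) \<and>
     (\<exists>K. \<forall>x. norm (T x) \<le> norm x * K)"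

definition hadjoint :: "('a::complex_inner \<Rightarrow> 'a) \<Rightarrow> ('a \<Rightarrow> 'a)" where
  "hadjoint T = (THE S. \<forall>x y. cinner (T x) y = cinner x (S y))"

definition positive_op :: "('a::complex_inner \<Rightarrow> 'a) \<Rightarrow> bool" where
  "positive_op A \<longleftrightarrow> bounded_clinear A \<and> (\<forall>x. cinner (A x) x \<in> \<real> \<and> 0 \<le> Re (cinner (A x) x))"

definition dim_range_ge2 :: "('a::complex_inner \<Rightarrow> 'a) \<Rightarrow> bool" where
  "dim_range_ge2 A \<longleftrightarrow> (\<exists>u\<in>range A. \<exists>v\<in>range A.
      \<forall>a b. a *\<^sub>C u + b *\<^sub>C v = 0 \<longrightarrow> a = 0 \<and> b = 0)"

definition innerA :: "('a::complex_inner \<Rightarrow> 'a) \<Rightarrow> 'a \<Rightarrow> 'a \<Rightarrow> complex" where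
  "innerA A x y = cinner (A x) y"

definition normA :: "('a::complex_inner \<Rightarrow> 'a) \<Rightarrow> 'a \<Rightarrow> real" where
  "normA A x = sqrt (Re (innerA A x x))"

definition opnormA :: "('a::complex_inner \<Rightarrow> 'a) \<Rightarrow> ('a \<Rightarrow> 'a) \<Rightarrow> real" where
  "opnormA A S = Sup {normA A (S x) / normA A x | x. x \<in> closure (range A) \<and> x \<noteq> 0}"

definition is_A_adjoint :: "('a::complex_inner \<Rightarrow> 'a) \<Rightarrow> ('a \<Rightarrow> 'a) \<Rightarrow> ('a \<Rightarrow> 'a) \<Rightarrow> bool" where
  "is_A_adjoint A T W \<longleftrightarrow> (\<forall>x y. innerA A (T x) y = innerA A x (W y))"

definition BA :: "('a::complex_inner \<Rightarrow> 'a) \<Rightarrow> ('a \<Rightarrow> 'a) set" where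
  "BA A = {T. bounded_clinear T \<and> (\<exists>W. bounded_clinear W \<and> is_A_adjoint A T W)}"

definition sharpA :: "('a::complex_inner \<Rightarrow> 'a) \<Rightarrow> ('a \<Rightarrow> 'a) \<Rightarrow> ('a \<Rightarrow> 'a)" where
  "sharpA A T = (THE X. bounded_clinear X \<and> A \<circ> X = hadjoint T \<circ> A \<and> range X \<subseteq> closure (range A))"

definition wqA :: "complex \<Rightarrow> ('a::complex_inner \<Rightarrow> 'a) \<Rightarrow> ('a \<Rightarrow> 'a) \<Rightarrow> real" where
  "wqA q A T = Sup {cmod (innerA A (T x) y) | x y.
      normA A x = 1 \<and> normA A y = 1 \<and> innerA A x y = q}"

end

theory Submission
  imports Defs
begin

text \<open>Lower bound: for an A-unit vector u and an A-unit vector z A-orthogonal to u (which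
  exists since \<open>dim R(A) \<ge> 2\<close>), both vectors \<open>y = cnj q u \<plusminus> sqrt (1 - |q|\<^sup>2) z\<close> satisfy
  \<open>\<langle>u, y\<rangle>\<^sub>A = q\<close>, and averaging \<open>\<langle>T u, y\<rangle>\<^sub>A\<close> over the two signs gives
  \<open>|q| |\<langle>T u, u\<rangle>\<^sub>A| \<le> w\<^sub>q\<^sub>,\<^sub>A(T)\<close>. Hence \<open>w\<^sub>q\<^sub>,\<^sub>A(T) / |q|\<close> bounds the A-numerical range of T and
  therefore the A-seminorms of its A-selfadjoint real and imaginary parts, and
  \<open>T\<^sup>\<sharp> T + T T\<^sup>\<sharp> = 2 ((Re T)\<^sup>2 + (Im T)\<^sup>2)\<close> has A-seminorm at most \<open>4 w\<^sub>q\<^sub>,\<^sub>A(T)\<^sup>2 / |q|\<^sup>2\<close>.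

  Upper bound: writing \<open>y = cnj q x + r\<close> with r A-orthogonal to x, one has
  \<open>\<parallel>r\<parallel>\<^sub>A = sqrt (1 - |q|\<^sup>2)\<close> and
  \<open>|\<langle>T x, y\<rangle>\<^sub>A| \<le> |q| |\<langle>T x, x\<rangle>\<^sub>A| + sqrt (1 - |q|\<^sup>2) \<parallel>T x\<parallel>\<^sub>A\<close>, where
  \<open>|\<langle>T x, x\<rangle>\<^sub>A| \<le> min \<parallel>T x\<parallel>\<^sub>A \<parallel>T\<^sup>\<sharp> x\<parallel>\<^sub>A\<close> and
  \<open>\<parallel>T x\<parallel>\<^sub>A\<^sup>2 + \<parallel>T\<^sup>\<sharp> x\<parallel>\<^sub>A\<^sup>2 = \<langle>(T\<^sup>\<sharp> T + T T\<^sup>\<sharp>) x, x\<rangle>\<^sub>A \<le> \<parallel>T\<^sup>\<sharp> T + T T\<^sup>\<sharp>\<parallel>\<^sub>A\<close> for A-unit x.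

  Both suprema are finite because a bounded A-selfadjoint operator is A-bounded.\<close>

section \<open>Complex inner product spaces\<close>

lemma scaleC_zero_left [simp]: "(0::complex) *\<^sub>C (x::'a::complex_vector) = 0"
proof -
  have "0 *\<^sub>C x = 0 *\<^sub>C x + 0 *\<^sub>C x" by (metis add_0 scaleC_add_left)
  then show ?thesis by simp
qed

lemma scaleC_zero_right [simp]: "a *\<^sub>C (0::'a::complex_vector) = 0"
proof -
  have "a *\<^sub>C (0::'a) = a *\<^sub>C 0 + a *\<^sub>C 0" by (metis add_0 scaleC_add_right)
  then show ?thesis by simp
qed

lemma scaleC_minus_left: "(- a) *\<^sub>C (x::'a::complex_vector) = - (a *\<^sub>C x)"
  by (metis add.right_inverse add_eq_0_iff scaleC_add_left scaleC_zero_left)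

lemma scaleC_minus_right: "a *\<^sub>C (- x::'a::complex_vector) = - (a *\<^sub>C x)"
  by (metis add.right_inverse add_eq_0_iff scaleC_add_right scaleC_zero_right)

lemma scaleC_diff_right: "a *\<^sub>C (x - y::'a::complex_vector) = a *\<^sub>C x - a *\<^sub>C y"
  by (simp only: diff_conv_add_uminus scaleC_add_right scaleC_minus_right)

lemma scaleC_of_real: "complex_of_real r *\<^sub>C (x::'a::complex_vector) = r *\<^sub>R x"
  by (simp add: scaleR_scaleC)

lemma cinner_zero_left [simp]: "cinner 0 (y::'a::complex_inner) = 0"
  by (metis add.right_neutral add_left_cancel cinner_add_left)

lemma cinner_minus_left: "cinner (- x) (y::'a::complex_inner) = - cinner x y"
  by (metis add.right_inverse add_eq_0_iff cinner_add_left cinner_zero_left)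

lemma cinner_diff_left: "cinner (x - y) (z::'a::complex_inner) = cinner x z - cinner y z"
  by (simp only: diff_conv_add_uminus cinner_add_left cinner_minus_left)

lemma cinner_add_right: "cinner x (y + z::'a::complex_inner) = cinner x y + cinner x z"
  by (metis cinner_add_left cinner_commute complex_cnj_add)

lemma cinner_zero_right [simp]: "cinner (x::'a::complex_inner) 0 = 0"
  by (metis cinner_commute cinner_zero_left complex_cnj_zero)

lemma cinner_minus_right: "cinner x (- y::'a::complex_inner) = - cinner x y"
  by (metis cinner_commute cinner_minus_left complex_cnj_minus)

lemma cinner_diff_right: "cinner x (y - z::'a::complex_inner) = cinner x y - cinner x z"
  by (simp only: diff_conv_add_uminus cinner_add_right cinner_minus_right)

lemma cinner_scaleC_right: "cinner x (c *\<^sub>C y::'a::complex_inner) = cnj c * cinner x y"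
  by (metis cinner_commute cinner_scaleC_left complex_cnj_mult)

lemma cinner_self_real: "cinner x (x::'a::complex_inner) = complex_of_real (Re (cinner x x))"
  by (metis cinner_commute complex_cnj_cancel_iff complex_is_Real_iff Reals_cnj_iff of_real_Re)

lemma cinner_eqI: "(\<And>z. cinner z x = cinner z (y::'a::complex_inner)) \<Longrightarrow> x = y"
  by (metis cinner_diff_right cinner_eq_zero_iff cinner_commute diff_self eq_iff_diff_eq_0)

section \<open>Bounded complex-linear operators\<close>

lemma bounded_clinear_scaleC: "bounded_clinear T \<Longrightarrow> T (c *\<^sub>C x) = c *\<^sub>C T x"
  by (simp add: bounded_clinear_def)

lemma bounded_clinear_imp_bounded_linear: "bounded_clinear T \<Longrightarrow> bounded_linear T"
proof -
  assume T: "bounded_clinear T"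
  then obtain K where K: "\<forall>x. norm (T x) \<le> norm x * K" by (auto simp: bounded_clinear_def)
  show ?thesis
  proof (rule bounded_linear_intro[where K=K])
    show "T (x + y) = T x + T y" for x y using T by (simp add: bounded_clinear_def)
    show "T (r *\<^sub>R x) = r *\<^sub>R T x" for r x
      using bounded_clinear_scaleC[OF T, of "complex_of_real r"] by (simp only: scaleC_of_real)
    show "norm (T x) \<le> norm x * K" for x using K by blast
  qed
qed

lemma bounded_clinear_compose:
  assumes S: "bounded_clinear S" and T: "bounded_clinear T"
  shows "bounded_clinear (\<lambda>x. S (T x))"
proof -
  have "bounded_linear (\<lambda>x. S (T x))"
    using bounded_linear_compose bounded_clinear_imp_bounded_linear S T by blast
  then obtain K where "\<forall>x. norm (S (T x)) \<le> norm x * K" using bounded_linear.bounded by blast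
  moreover have "S (T (x + y)) = S (T x) + S (T y)" for x y
    using S T by (simp add: bounded_clinear_def)
  moreover have "S (T (c *\<^sub>C x)) = c *\<^sub>C S (T x)" for c x
    using S T by (simp add: bounded_clinear_scaleC)
  ultimately show ?thesis unfolding bounded_clinear_def by blast
qed

lemma bounded_clinear_ident: "bounded_clinear (\<lambda>x. x)"
  by (auto simp: bounded_clinear_def intro: exI[of _ 1])

text \<open>Polarization: a positive operator is selfadjoint because its quadratic form is real
  on both x + y and x + i y.\<close>

lemma positive_op_selfadjoint:
  assumes "positive_op A"
  shows "cinner (A x) y = cinner x (A y)"
proof -
  have A: "bounded_clinear A" using assms by (simp add: positive_op_def)
  have A_add: "A (u + v) = A u + A v" for u v using A by (simp add: bounded_clinear_def)
  have diag: "cinner (A u) u = cinner u (A u)" for u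
  proof -
    have "cinner (A u) u \<in> \<real>" using assms by (simp add: positive_op_def)
    then show ?thesis by (metis Reals_cnj_iff cinner_commute)
  qed
  define a b c d where "a = cinner (A x) y" and "b = cinner x (A y)"
    and "c = cinner (A y) x" and "d = cinner y (A x)"
  have "cinner (A x) x + a + c + cinner (A y) y = cinner x (A x) + b + d + cinner y (A y)"
    using diag[of "x + y"]
    by (simp add: a_def b_def c_def d_def A_add cinner_add_left cinner_add_right algebra_simps)
  then have real_part: "c - d = - (a - b)"
    using diag[of x] diag[of y] by (simp add: algebra_simps)
  have "cinner (A x) x + \<i> * c + cnj \<i> * (a + \<i> * cinner (A y) y) =
      cinner x (A x) + \<i> * d + cnj \<i> * (b + \<i> * cinner y (A y))"
    using diag[of "x + \<i> *\<^sub>C y"]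
    by (simp only: a_def b_def c_def d_def A_add bounded_clinear_scaleC[OF A] cinner_add_left
        cinner_add_right cinner_scaleC_left cinner_scaleC_right)
  then have "cinner (A x) x + (- \<i>) * a + \<i> * c + cinner (A y) y
      = cinner x (A x) + (- \<i>) * b + \<i> * d + cinner y (A y)"
    by (simp add: algebra_simps)
  then have "- \<i> * (a - b) + \<i> * (c - d) = 0"
    using diag[of x] diag[of y] by (simp add: algebra_simps)
  then have "(-2 * \<i>) * (a - b) = 0"
    unfolding real_part by (simp add: algebra_simps)
  then show ?thesis by (simp add: a_def b_def)
qed

section \<open>The semi-inner product induced by a positive operator\<close>

lemma discriminant_le_if_quadratic_nonneg:
  fixes a k c :: real
  assumes "\<And>t. 0 \<le> a - 2 * t * k + t\<^sup>2 * k * c" and "0 \<le> k" and "0 \<le> c"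
  shows "k \<le> a * c"
proof (cases "c = 0")
  case True
  show ?thesis
  proof (rule ccontr)
    assume "\<not> k \<le> a * c"
    then have "k > 0" using True by simp
    have "0 \<le> a - 2 * ((a + 1) / (2 * k)) * k" using assms(1)[of "(a + 1) / (2 * k)"] True by simp
    also have "\<dots> = -1" using \<open>k > 0\<close> by (simp add: field_simps)
    finally show False by simp
  qed
next
  case False
  then have c: "c > 0" using assms by simp
  have "0 \<le> a - 2 * (1 / c) * k + (1 / c)\<^sup>2 * k * c" by (rule assms(1))
  also have "\<dots> = a - k / c" using c by (simp add: field_simps power2_eq_square)
  finally show ?thesis using c by (simp add: field_simps)
qed

locale positive_operator =
  fixes A :: "'a::complex_inner \<Rightarrow> 'a"
  assumes positive: "positive_op A"
begin

lemma bounded_clinear_A: "bounded_clinear A"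
  using positive by (simp add: positive_op_def)

lemma linear_A: "linear A"
  using bounded_clinear_A bounded_clinear_imp_bounded_linear bounded_linear.linear by blast

lemma cinner_A_commute: "cinner (A x) y = cinner x (A y)"
  by (rule positive_op_selfadjoint[OF positive])

lemma innerA_add_left: "innerA A (x + y) z = innerA A x z + innerA A y z"
  by (simp add: innerA_def linear_add[OF linear_A] cinner_add_left)

lemma innerA_add_right: "innerA A x (y + z) = innerA A x y + innerA A x z"
  by (simp add: innerA_def cinner_add_right)

lemma innerA_diff_left: "innerA A (x - y) z = innerA A x z - innerA A y z"
  by (simp add: innerA_def linear_diff[OF linear_A] cinner_diff_left)

lemma innerA_diff_right: "innerA A x (y - z) = innerA A x y - innerA A x z"
  by (simp add: innerA_def cinner_diff_right)

lemma innerA_scaleC_left: "innerA A (c *\<^sub>C x) y = c * innerA A x y"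
  by (simp add: innerA_def bounded_clinear_scaleC[OF bounded_clinear_A] cinner_scaleC_left)

lemma innerA_scaleC_right: "innerA A x (c *\<^sub>C y) = cnj c * innerA A x y"
  by (simp add: innerA_def cinner_scaleC_right)

lemmas innerA_simps = innerA_add_left innerA_add_right innerA_diff_left innerA_diff_right
  innerA_scaleC_left innerA_scaleC_right

lemma innerA_commute: "innerA A x y = cnj (innerA A y x)"
  by (metis cinner_commute innerA_def cinner_A_commute)

lemma innerA_self_nonneg: "0 \<le> Re (innerA A x x)"
  using positive by (simp add: positive_op_def innerA_def)

lemma normA_nonneg: "0 \<le> normA A x"
  by (simp add: normA_def innerA_self_nonneg)

lemma normA_sq: "(normA A x)\<^sup>2 = Re (innerA A x x)"
  by (simp add: normA_def innerA_self_nonneg)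

lemma innerA_self: "innerA A x x = complex_of_real ((normA A x)\<^sup>2)"
  by (metis innerA_commute normA_sq complex_cnj_cancel_iff complex_is_Real_iff Reals_cnj_iff
      of_real_Re)

lemma norm_innerA_le: "cmod (innerA A x y) \<le> normA A x * normA A y"
proof -
  define b where "b = innerA A x y"
  have bb: "b * cnj b = complex_of_real ((cmod b)\<^sup>2)"
    by (simp only: complex_norm_square)
  have "0 \<le> (normA A x)\<^sup>2 - 2 * t * (cmod b)\<^sup>2 + t\<^sup>2 * (cmod b)\<^sup>2 * (normA A y)\<^sup>2" for t
  proof -
    have "innerA A (x - (t * b) *\<^sub>C y) (x - (t * b) *\<^sub>C y)
        = innerA A x x - t * (b * cnj b) - t * (b * cnj b) + t * t * (b * cnj b) * innerA A y y"
      using innerA_commute[of y x] by (simp add: innerA_simps b_def algebra_simps)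
    also have "\<dots> = complex_of_real
        ((normA A x)\<^sup>2 - 2 * t * (cmod b)\<^sup>2 + t\<^sup>2 * (cmod b)\<^sup>2 * (normA A y)\<^sup>2)"
      by (simp add: bb innerA_self power2_eq_square algebra_simps)
    finally show ?thesis using innerA_self_nonneg[of "x - (t * b) *\<^sub>C y"] by simp
  qed
  then have "(cmod b)\<^sup>2 \<le> (normA A x)\<^sup>2 * (normA A y)\<^sup>2"
    by (rule discriminant_le_if_quadratic_nonneg) auto
  then show ?thesis
    unfolding b_def by (metis normA_nonneg mult_nonneg_nonneg power2_le_imp_le power_mult_distrib)
qed

lemma normA_scaleC: "normA A (c *\<^sub>C x) = cmod c * normA A x"
proof -
  have "(normA A (c *\<^sub>C x))\<^sup>2 = Re (c * cnj c * innerA A x x)"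
    by (simp only: normA_sq innerA_scaleC_left innerA_scaleC_right mult.assoc mult.left_commute)
  also have "\<dots> = Re (complex_of_real ((cmod c)\<^sup>2) * complex_of_real ((normA A x)\<^sup>2))"
    by (simp only: innerA_self complex_norm_square)
  also have "\<dots> = (cmod c * normA A x)\<^sup>2"
    by (simp del: of_real_power add: power_mult_distrib)
  finally show ?thesis by (simp add: normA_nonneg power2_eq_iff_nonneg)
qed

lemma normA_scaleR: "normA A (r *\<^sub>R x) = \<bar>r\<bar> * normA A x"
  by (simp add: scaleR_scaleC normA_scaleC)

lemma normA_normalize: "normA A x \<noteq> 0 \<Longrightarrow> normA A ((1 / normA A x) *\<^sub>R x) = 1"
  using normA_nonneg[of x] by (simp add: normA_scaleR)

lemma normA_add_sq: "(normA A (x + y))\<^sup>2 = (normA A x)\<^sup>2 + 2 * Re (innerA A x y) + (normA A y)\<^sup>2"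
  using innerA_commute[of y x] by (simp add: normA_sq innerA_simps)

lemma normA_diff_sq: "(normA A (x - y))\<^sup>2 = (normA A x)\<^sup>2 - 2 * Re (innerA A x y) + (normA A y)\<^sup>2"
  using innerA_commute[of y x] by (simp add: normA_sq innerA_simps)

lemma A_eq_0_if_normA_eq_0: "normA A x = 0 \<Longrightarrow> A x = 0"
  using norm_innerA_le[of x "A x"] by (simp add: innerA_def cinner_eq_zero_iff)

end

lemma positive_operator_ident: "positive_operator (\<lambda>x::'a::complex_inner. x)"
  unfolding positive_operator_def positive_op_def
  by (metis bounded_clinear_ident cinner_ge_zero cinner_self_real Reals_of_real)

lemma innerA_ident: "innerA (\<lambda>x. x) = cinner"
  by (simp add: innerA_def [abs_def])

lemma normA_ident: "normA (\<lambda>x. x) = norm"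
  by (simp add: normA_def [abs_def] innerA_def norm_eq_sqrt_cinner [abs_def])

lemma norm_cinner_le: "cmod (cinner x y) \<le> norm x * norm (y::'a::complex_inner)"
  using positive_operator.norm_innerA_le[OF positive_operator_ident] by (simp add: innerA_ident normA_ident)

lemma norm_scaleC: "norm (c *\<^sub>C x) = cmod c * norm (x::'a::complex_inner)"
  using positive_operator.normA_scaleC[OF positive_operator_ident] by (simp add: normA_ident)

lemma norm_add_sq: "(norm (x + y))\<^sup>2 = (norm x)\<^sup>2 + 2 * Re (cinner x y) + (norm (y::'a::complex_inner))\<^sup>2"
  using positive_operator.normA_add_sq[OF positive_operator_ident] by (simp add: innerA_ident normA_ident)

lemma norm_diff_sq: "(norm (x - y))\<^sup>2 = (norm x)\<^sup>2 - 2 * Re (cinner x y) + (norm (y::'a::complex_inner))\<^sup>2"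
  using positive_operator.normA_diff_sq[OF positive_operator_ident] by (simp add: innerA_ident normA_ident)

lemma parallelogram_law:
  "(norm (x + y))\<^sup>2 + (norm (x - y))\<^sup>2 = 2 * (norm x)\<^sup>2 + 2 * (norm (y::'a::complex_inner))\<^sup>2"
  by (simp add: norm_add_sq norm_diff_sq)

section \<open>Orthogonal projections and adjoints in complex Hilbert spaces\<close>

definition csubspace :: "'a::complex_vector set \<Rightarrow> bool" where
  "csubspace M \<longleftrightarrow> 0 \<in> M \<and> (\<forall>u\<in>M. \<forall>v\<in>M. u + v \<in> M) \<and> (\<forall>c. \<forall>u\<in>M. c *\<^sub>C u \<in> M)"

lemma csubspace_0: "csubspace M \<Longrightarrow> 0 \<in> M"
  by (simp add: csubspace_def)

lemma csubspace_add: "csubspace M \<Longrightarrow> u \<in> M \<Longrightarrow> v \<in> M \<Longrightarrow> u + v \<in> M"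
  by (simp add: csubspace_def)

lemma csubspace_scaleC: "csubspace M \<Longrightarrow> u \<in> M \<Longrightarrow> c *\<^sub>C u \<in> M"
  by (simp add: csubspace_def)

lemma csubspace_scaleR: "csubspace M \<Longrightarrow> u \<in> M \<Longrightarrow> r *\<^sub>R u \<in> M"
  by (simp add: csubspace_scaleC scaleR_scaleC)

lemma csubspace_diff: "csubspace M \<Longrightarrow> u \<in> M \<Longrightarrow> v \<in> M \<Longrightarrow> u - v \<in> M"
  using csubspace_add[of M u "(-1) *\<^sub>R v"] csubspace_scaleR[of M v "-1"] by simp

lemma csubspace_range:
  assumes "bounded_clinear A"
  shows "csubspace (range A)"
  unfolding csubspace_def
proof (intro conjI ballI allI)
  show "0 \<in> range A" using bounded_clinear_scaleC[OF assms, of 0 0] by (metis rangeI scaleC_zero_left)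
  show "u + v \<in> range A" if "u \<in> range A" "v \<in> range A" for u v
  proof -
    from that obtain a b where "u = A a" "v = A b" by blast
    then have "u + v = A (a + b)" using assms by (simp add: bounded_clinear_def)
    then show ?thesis by simp
  qed
  show "c *\<^sub>C u \<in> range A" if "u \<in> range A" for c u
    using that by (auto simp: bounded_clinear_scaleC[OF assms, symmetric])
qed

lemma bounded_linear_scaleC: "bounded_linear (\<lambda>x::'a::complex_inner. c *\<^sub>C x)"
proof (rule bounded_linear_intro[where K="cmod c"])
  show "c *\<^sub>C (x + y) = c *\<^sub>C x + c *\<^sub>C y" for x y :: 'a by (rule scaleC_add_right)
  show "c *\<^sub>C (r *\<^sub>R x) = r *\<^sub>R (c *\<^sub>C x)" for r and x :: 'a
    by (simp add: scaleR_scaleC scaleC_scaleC mult.commute)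
  show "norm (c *\<^sub>C x) \<le> norm x * cmod c" for x :: 'a by (simp add: norm_scaleC mult.commute)
qed

lemma csubspace_closure:
  fixes M :: "'a::complex_inner set"
  assumes "csubspace M"
  shows "csubspace (closure M)"
proof -
  have "u + v \<in> closure M" if u: "u \<in> closure M" and v: "v \<in> closure M" for u v
  proof -
    obtain f where "\<And>n. f n \<in> M" "f \<longlonglongrightarrow> u"
      using u unfolding closure_sequential by blast
    moreover obtain g where "\<And>n. g n \<in> M" "g \<longlonglongrightarrow> v"
      using v unfolding closure_sequential by blast
    ultimately
    show ?thesis
      unfolding closure_sequential using assms
      by (intro exI[of _ "\<lambda>n. f n + g n"]) (auto intro: tendsto_add csubspace_add)
  qed
  moreover have "c *\<^sub>C u \<in> closure M" if u: "u \<in> closure M" for c u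
  proof -
    obtain f where "\<And>n. f n \<in> M" "f \<longlonglongrightarrow> u"
      using u unfolding closure_sequential by blast
    then show ?thesis
      unfolding closure_sequential using assms
      by (intro exI[of _ "\<lambda>n. c *\<^sub>C f n"])
        (auto intro: bounded_linear.tendsto[OF bounded_linear_scaleC] csubspace_scaleC)
  qed
  ultimately show ?thesis
    using assms closure_subset csubspace_0 unfolding csubspace_def by blast
qed

lemma Cauchy_if_sq_dist_le:
  fixes f :: "nat \<Rightarrow> 'a::real_normed_vector"
  assumes "e \<longlonglongrightarrow> 0" and "\<And>m n. (norm (f m - f n))\<^sup>2 \<le> e m + e n"
  shows "Cauchy f"
proof (rule CauchyI)
  fix r :: real
  assume "0 < r"
  then have "\<forall>\<^sub>F n in sequentially. e n < r\<^sup>2 / 2"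
    using assms(1) by (intro order_tendstoD) auto
  then obtain N where N: "\<And>n. n \<ge> N \<Longrightarrow> e n < r\<^sup>2 / 2"
    by (auto simp: eventually_sequentially)
  have "norm (f m - f n) < r" if "m \<ge> N" "n \<ge> N" for m n
  proof -
    have "(norm (f m - f n))\<^sup>2 < r\<^sup>2" using assms(2)[of m n] N[OF that(1)] N[OF that(2)] by linarith
    then show ?thesis using \<open>0 < r\<close> by (simp add: power2_less_imp_less)
  qed
  then show "\<exists>N. \<forall>m\<ge>N. \<forall>n\<ge>N. norm (f m - f n) < r" by blast
qed

lemma apollonius_identity:
  "(norm (a - b))\<^sup>2
    = 2 * (norm (x - a))\<^sup>2 + 2 * (norm (x - b))\<^sup>2 - 4 * (norm (x - (1 / 2) *\<^sub>R (a + b)))\<^sup>2"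
  for a b x :: "'a::complex_inner"
proof -
  have "(x - a) + (x - b) = 2 *\<^sub>R (x - (1 / 2) *\<^sub>R (a + b))"
    by (simp add: algebra_simps scaleR_2)
  then have "(norm ((x - a) + (x - b)))\<^sup>2 = 4 * (norm (x - (1 / 2) *\<^sub>R (a + b)))\<^sup>2"
    by (simp add: power_mult_distrib)
  then show ?thesis using parallelogram_law[of "x - a" "x - b"] by (simp add: norm_minus_commute)
qed

text \<open>A minimizing sequence is Cauchy by Apollonius' identity, since the midpoint of two of
  its terms lies in M as well.\<close>

lemma closed_csubspace_closest_point:
  fixes M :: "'a::chilbert_space set"
  assumes "closed M" and M: "csubspace M"
  shows "\<exists>p\<in>M. \<forall>m\<in>M. norm (x - p) \<le> norm (x - m)"
proof -
  define D where "D = {(norm (x - m))\<^sup>2 | m. m \<in> M}"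
  define d where "d = Inf D"
  have d_le: "d \<le> (norm (x - m))\<^sup>2" if "m \<in> M" for m
    unfolding d_def by (rule cInf_lower) (use that in \<open>auto simp: D_def intro: bdd_belowI[of _ 0]\<close>)
  define e where "e n = inverse (real (Suc n))" for n
  have "\<exists>m\<in>M. (norm (x - m))\<^sup>2 < d + e n" for n
  proof -
    have "Inf D < d + e n" by (simp add: d_def e_def)
    then show ?thesis using cInf_lessD[of D] csubspace_0[OF M] by (auto simp: D_def)
  qed
  then obtain f where f_in: "\<And>n. f n \<in> M" and f_close: "\<And>n. (norm (x - f n))\<^sup>2 < d + e n"
    by metis
  have "(norm (f m - f n))\<^sup>2 \<le> 2 * e m + 2 * e n" for m n
  proof -
    have "(1 / 2) *\<^sub>R (f m + f n) \<in> M" using M f_in by (intro csubspace_scaleR csubspace_add)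
    then have "d \<le> (norm (x - (1 / 2) *\<^sub>R (f m + f n)))\<^sup>2" by (rule d_le)
    then show ?thesis
      using apollonius_identity[of "f m" "f n" x] f_close[of m] f_close[of n] by linarith
  qed
  moreover have "(\<lambda>n. 2 * e n) \<longlonglongrightarrow> 0"
    unfolding e_def by (rule tendsto_mult_right_zero[OF LIMSEQ_inverse_real_of_nat])
  ultimately have "Cauchy f" by (rule Cauchy_if_sq_dist_le[rotated])
  then obtain p where p: "f \<longlonglongrightarrow> p" using Cauchy_convergent_iff convergent_def by blast
  have "(norm (x - p))\<^sup>2 \<le> d"
  proof (rule LIMSEQ_le)
    show "(\<lambda>n. (norm (x - f n))\<^sup>2) \<longlonglongrightarrow> (norm (x - p))\<^sup>2" by (intro tendsto_intros p)
    show "(\<lambda>n. d + e n) \<longlonglongrightarrow> d"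
      using tendsto_add[OF tendsto_const LIMSEQ_inverse_real_of_nat] by (simp add: e_def)
    show "\<exists>N. \<forall>n\<ge>N. (norm (x - f n))\<^sup>2 \<le> d + e n" using f_close less_imp_le by blast
  qed
  then have "\<forall>m\<in>M. norm (x - p) \<le> norm (x - m)"
    using d_le by (meson norm_ge_zero order_trans power2_le_imp_le)
  moreover have "p \<in> M" using closed_sequentially[OF assms(1) _ p] f_in by blast
  ultimately show ?thesis by blast
qed

lemma closest_point_orthogonal:
  fixes M :: "'a::complex_inner set"
  assumes "csubspace M" and "p \<in> M" and closest: "\<forall>m\<in>M. norm (x - p) \<le> norm (x - m)"
    and "m \<in> M"
  shows "cinner (x - p) m = 0"
proof (rule ccontr)
  define v c where "v = x - p" and "c = cinner (x - p) m"
  assume "cinner (x - p) m \<noteq> 0"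
  then have c0: "c \<noteq> 0" by (simp add: c_def)
  define eps where "eps = 1 / ((norm m)\<^sup>2 + 1)"
  have "0 < (norm m)\<^sup>2 + 1" by (simp add: add_nonneg_pos)
  then have eps: "0 < eps" "eps * (norm m)\<^sup>2 < 1" by (auto simp: eps_def field_simps)
  define t where "t = complex_of_real eps * c"
  have "p + t *\<^sub>C m \<in> M" using assms by (intro csubspace_add csubspace_scaleC)
  then have le: "norm v \<le> norm (v - t *\<^sub>C m)" using closest by (simp add: v_def algebra_simps)
  have "cinner v (t *\<^sub>C m) = complex_of_real eps * (c * cnj c)"
    by (simp add: cinner_scaleC_right t_def c_def v_def algebra_simps)
  then have ct: "cinner v (t *\<^sub>C m) = complex_of_real (eps * (cmod c)\<^sup>2)"
    by (simp only: complex_norm_square[symmetric] of_real_mult)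
  have "(norm (v - t *\<^sub>C m))\<^sup>2 = (norm v)\<^sup>2 - 2 * (eps * (cmod c)\<^sup>2) + (cmod t * norm m)\<^sup>2"
    by (simp add: norm_diff_sq ct norm_scaleC)
  also have "(cmod t * norm m)\<^sup>2 = eps * (cmod c)\<^sup>2 * (eps * (norm m)\<^sup>2)"
    using eps by (simp add: t_def norm_mult power_mult_distrib power2_eq_square)
  also have "eps * (cmod c)\<^sup>2 * (eps * (norm m)\<^sup>2) < eps * (cmod c)\<^sup>2 * 1"
    using eps c0 by (intro mult_strict_left_mono) auto
  finally have "(norm (v - t *\<^sub>C m))\<^sup>2 < (norm v)\<^sup>2 - eps * (cmod c)\<^sup>2" by simp
  moreover have "0 < eps * (cmod c)\<^sup>2" using eps c0 by simp
  ultimately have "(norm (v - t *\<^sub>C m))\<^sup>2 < (norm v)\<^sup>2" by linarith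
  then have "norm (v - t *\<^sub>C m) < norm v" using norm_ge_zero by (rule power2_less_imp_less)
  then show False using le by simp
qed

definition cproj :: "'a::chilbert_space set \<Rightarrow> 'a \<Rightarrow> 'a" where
  "cproj M x = (SOME p. p \<in> M \<and> (\<forall>m\<in>M. cinner (x - p) m = 0))"

context
  fixes M :: "'a::chilbert_space set"
  assumes closed_M: "closed M" and csubspace_M: "csubspace M"
begin

lemma cproj_in_orthogonal: "cproj M x \<in> M \<and> (\<forall>m\<in>M. cinner (x - cproj M x) m = 0)"
proof -
  have "\<exists>p\<in>M. \<forall>m\<in>M. cinner (x - p) m = 0"
    using closed_csubspace_closest_point[OF closed_M csubspace_M, of x]
      closest_point_orthogonal[OF csubspace_M] by metis
  then show ?thesis unfolding cproj_def by (rule someI2_bex) blast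
qed

lemma cproj_in: "cproj M x \<in> M"
  using cproj_in_orthogonal by blast

lemma cproj_orthogonal: "m \<in> M \<Longrightarrow> cinner (x - cproj M x) m = 0"
  using cproj_in_orthogonal by blast

lemma cproj_unique:
  assumes "p \<in> M" and "\<And>m. m \<in> M \<Longrightarrow> cinner (x - p) m = 0"
  shows "cproj M x = p"
proof -
  have d: "cproj M x - p \<in> M" by (rule csubspace_diff[OF csubspace_M cproj_in assms(1)])
  have "cinner (cproj M x - p) m = cinner (x - p) m - cinner (x - cproj M x) m" for m
    by (simp add: cinner_diff_left)
  then have "cinner (cproj M x - p) (cproj M x - p) = 0"
    using assms(2)[OF d] cproj_orthogonal[OF d] by simp
  then show ?thesis by (simp add: cinner_eq_zero_iff)
qed

lemma bounded_clinear_cproj: "bounded_clinear (cproj M)"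
  unfolding bounded_clinear_def
proof (intro conjI allI exI)
  show "cproj M (x + y) = cproj M x + cproj M y" for x y
  proof (rule cproj_unique)
    show "cproj M x + cproj M y \<in> M" by (rule csubspace_add[OF csubspace_M cproj_in cproj_in])
    show "cinner (x + y - (cproj M x + cproj M y)) m = 0" if "m \<in> M" for m
      using cproj_orthogonal[OF that, of x] cproj_orthogonal[OF that, of y]
      by (simp add: cinner_diff_left cinner_add_left algebra_simps)
  qed
  show "cproj M (c *\<^sub>C x) = c *\<^sub>C cproj M x" for c x
  proof (rule cproj_unique)
    show "c *\<^sub>C cproj M x \<in> M" by (rule csubspace_scaleC[OF csubspace_M cproj_in])
    show "cinner (c *\<^sub>C x - c *\<^sub>C cproj M x) m = 0" if "m \<in> M" for m
      using cproj_orthogonal[OF that, of x] by (simp add: scaleC_diff_right[symmetric] cinner_scaleC_left)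
  qed
  show "norm (cproj M x) \<le> norm x * 1" for x
  proof -
    have "cinner (cproj M x) (x - cproj M x) = 0"
      using cproj_orthogonal[OF cproj_in, of x x] by (metis cinner_commute complex_cnj_zero)
    then have "(norm x)\<^sup>2 = (norm (cproj M x))\<^sup>2 + (norm (x - cproj M x))\<^sup>2"
      using norm_add_sq[of "cproj M x" "x - cproj M x"] by simp
    then show ?thesis by (simp add: power2_le_imp_le)
  qed
qed

end

lemma bounded_linear_cinner_left: "bounded_linear (\<lambda>v::'a::complex_inner. cinner v x)"
proof (rule bounded_linear_intro[where K="norm x"])
  show "cinner (u + v) x = cinner u x + cinner v x" for u v :: 'a by (rule cinner_add_left)
  show "cinner (r *\<^sub>R v) x = r *\<^sub>R cinner v x" for r and v :: 'a
    by (simp add: scaleR_scaleC cinner_scaleC_left scaleR_conv_of_real)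
  show "norm (cinner v x) \<le> norm v * norm x" for v :: 'a by (rule norm_cinner_le)
qed

text \<open>The representing vector is a multiple of the component of any u with f u \<noteq> 0
  orthogonal to the kernel of f.\<close>

lemma riesz_representation:
  fixes f :: "'a::chilbert_space \<Rightarrow> complex"
  assumes add: "\<And>x y. f (x + y) = f x + f y" and scaleC: "\<And>c x. f (c *\<^sub>C x) = c * f x"
    and bounded: "\<And>x. norm (f x) \<le> norm x * K"
  shows "\<exists>z. \<forall>x. f x = cinner x z"
proof (cases "\<forall>x. f x = 0")
  case True
  then show ?thesis by (intro exI[of _ 0]) simp
next
  case False
  then obtain u where u: "f u \<noteq> 0" by blast
  define N where "N = {x. f x = 0}"
  have "bounded_linear f"
  proof (rule bounded_linear_intro[where K=K])
    show "f (r *\<^sub>R x) = r *\<^sub>R f x" for r x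
      by (metis scaleC scaleC_of_real scaleR_conv_of_real)
  qed (use add bounded in auto)
  then have "closed N" unfolding N_def
    by (intro closed_Collect_eq) (auto intro: linear_continuous_on)
  moreover have f0: "f 0 = 0" using scaleC[of 0 0] by simp
  then have "csubspace N" by (simp add: csubspace_def N_def add scaleC)
  ultimately have cproj_N: "cproj N u \<in> N" "\<And>m. m \<in> N \<Longrightarrow> cinner (u - cproj N u) m = 0"
    using cproj_in cproj_orthogonal by blast+
  define w where "w = u - cproj N u"
  have fw: "f w = f u"
    using add[of w "cproj N u"] cproj_N(1) by (simp add: w_def N_def)
  then have "cinner w w \<noteq> 0" using u f0 by (auto simp: cinner_eq_zero_iff)
  moreover have "f x * cinner w w = f w * cinner x w" for x
  proof -
    define y where "y = f x *\<^sub>C w - f w *\<^sub>C x"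
    have "f y + f (f w *\<^sub>C x) = f (f x *\<^sub>C w)" using add[of y "f w *\<^sub>C x"] by (simp add: y_def)
    then have "y \<in> N" by (simp add: N_def scaleC mult.commute)
    then have "cinner y w = 0" using cproj_N(2)[of y] by (metis cinner_commute complex_cnj_zero w_def)
    then show ?thesis by (simp add: y_def cinner_diff_left cinner_scaleC_left)
  qed
  ultimately have "f x = cinner x (cnj (f w / cinner w w) *\<^sub>C w)" for x
    by (simp add: cinner_scaleC_right field_simps)
  then show ?thesis by blast
qed

lemma cinner_hadjoint:
  fixes T :: "'a::chilbert_space \<Rightarrow> 'a"
  assumes T: "bounded_clinear T"
  shows "cinner (T x) y = cinner x (hadjoint T y)"
proof -
  obtain K where K: "K > 0" "\<forall>x. norm (T x) \<le> norm x * K"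
    using bounded_linear.pos_bounded[OF bounded_clinear_imp_bounded_linear[OF T]] by blast
  have "\<exists>z. \<forall>x. cinner (T x) y = cinner x z" for y
  proof (rule riesz_representation[where K="K * norm y"])
    show "cinner (T (x + z)) y = cinner (T x) y + cinner (T z) y" for x z
      using T by (simp add: bounded_clinear_def cinner_add_left)
    show "cinner (T (c *\<^sub>C x)) y = c * cinner (T x) y" for c x
      by (simp add: bounded_clinear_scaleC[OF T] cinner_scaleC_left)
    show "norm (cinner (T x) y) \<le> norm x * (K * norm y)" for x
    proof -
      have "norm (cinner (T x) y) \<le> norm (T x) * norm y" by (rule norm_cinner_le)
      also have "\<dots> \<le> (norm x * K) * norm y"
        using K by (intro mult_right_mono) auto
      finally show ?thesis by (simp add: mult.assoc)
    qed
  qed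
  then obtain S where S: "\<forall>x y. cinner (T x) y = cinner x (S y)" by metis
  have "hadjoint T = S" unfolding hadjoint_def
  proof (rule the_equality)
    show "\<forall>x y. cinner (T x) y = cinner x (S y)" by (rule S)
    show "S' = S" if "\<forall>x y. cinner (T x) y = cinner x (S' y)" for S'
      using that S by (metis cinner_eqI ext)
  qed
  then show ?thesis using S by simp
qed

section \<open>Operators on the semi-inner product space\<close>

definition A_selfadjoint :: "('a::complex_inner \<Rightarrow> 'a) \<Rightarrow> ('a \<Rightarrow> 'a) \<Rightarrow> bool" where
  "A_selfadjoint A R \<longleftrightarrow> (\<forall>u v. innerA A (R u) v = innerA A u (R v))"

lemma funpow_norm_le:
  fixes R :: "'a::real_normed_vector \<Rightarrow> 'a"
  assumes "\<And>x. norm (R x) \<le> norm x * K" and "0 \<le> K"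
  shows "norm ((R ^^ n) x) \<le> K ^ n * norm x"
proof (induction n)
  case 0
  then show ?case by simp
next
  case (Suc n)
  have "norm ((R ^^ Suc n) x) \<le> norm ((R ^^ n) x) * K" using assms(1) by simp
  also have "\<dots> \<le> (K ^ n * norm x) * K" using Suc assms(2) by (rule mult_right_mono)
  finally show ?case by (simp add: algebra_simps)
qed

lemma le_mult_if_quadratic_bound:
  fixes a b w :: real
  assumes "0 \<le> a" and "0 \<le> b" and "0 \<le> w"
    and quadratic: "\<And>t. 0 \<le> t \<Longrightarrow> 2 * t * b\<^sup>2 \<le> w * (a\<^sup>2 + t\<^sup>2 * b\<^sup>2)"
  shows "b \<le> w * a"
proof (cases "b = 0")
  case True
  then show ?thesis using assms by simp
next
  case False
  then have b: "0 < b" using assms by simp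
  show ?thesis
  proof (cases "a = 0")
    case True
    define s where "s = 1 / (w + 1)"
    have s: "0 < s" "w * s < 1" using assms(3) by (auto simp: s_def field_simps)
    have "2 * s * b\<^sup>2 \<le> w * (s\<^sup>2 * b\<^sup>2)" using quadratic[of s] True s by simp
    also have "\<dots> = (w * s) * (s * b\<^sup>2)" by (simp add: power2_eq_square)
    also have "\<dots> < 1 * (s * b\<^sup>2)" using s b by (intro mult_strict_right_mono) auto
    finally have "2 * (s * b\<^sup>2) < s * b\<^sup>2" by (simp add: mult.assoc)
    moreover have "0 < s * b\<^sup>2" using s b by simp
    ultimately show ?thesis by linarith
  next
    case False
    then have a: "0 < a" using assms by simp
    have "2 * (a / b) * b\<^sup>2 \<le> w * (a\<^sup>2 + (a / b)\<^sup>2 * b\<^sup>2)" using quadratic[of "a / b"] a b by simp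
    also have "(a / b)\<^sup>2 * b\<^sup>2 = a\<^sup>2" using b by (simp add: power_divide)
    also have "2 * (a / b) * b\<^sup>2 = a * (2 * b)" using b by (simp add: power2_eq_square)
    finally have "a * (2 * b) \<le> a * (2 * (w * a))" by (simp add: power2_eq_square algebra_simps)
    then show ?thesis using a by simp
  qed
qed

context positive_operator
begin

abbreviation RA :: "'a set" where
  "RA \<equiv> closure (range A)"

lemma csubspace_RA: "csubspace RA"
  by (intro csubspace_closure csubspace_range bounded_clinear_A)

lemma A_in_RA: "A x \<in> RA"
  by (simp add: closure_subset[THEN subsetD])

lemma RA_A_eq_0:
  assumes "x \<in> RA" and "A x = 0"
  shows "x = 0"
proof -
  have "RA \<subseteq> {v. cinner v x = 0}"
  proof (rule closure_minimal)
    show "range A \<subseteq> {v. cinner v x = 0}" using assms(2) by (auto simp: cinner_A_commute)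
    show "closed {v. cinner v x = 0}"
      by (intro closed_Collect_eq) (auto intro: linear_continuous_on bounded_linear_cinner_left)
  qed
  then show ?thesis using assms(1) by (auto simp: cinner_eq_zero_iff)
qed

lemma normA_zero [simp]: "normA A 0 = 0"
  by (simp add: normA_def innerA_def)

lemma normA_pos_RA: "x \<in> RA \<Longrightarrow> x \<noteq> 0 \<Longrightarrow> 0 < normA A x"
  using RA_A_eq_0 A_eq_0_if_normA_eq_0 normA_nonneg by (metis less_eq_real_def)

lemma normA_le_opnormA:
  assumes bound: "\<And>x. normA A (R x) \<le> C * normA A x" and "x \<in> RA"
  shows "normA A (R x) \<le> opnormA A R * normA A x"
proof (cases "x = 0")
  case True
  then show ?thesis using bound[of 0] normA_nonneg[of "R 0"] by simp
next
  case False
  have "normA A (R y) / normA A y \<le> C" if "y \<in> RA" "y \<noteq> 0" for y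
    using bound[of y] normA_pos_RA[OF that] by (simp add: divide_le_eq)
  then have "bdd_above {normA A (R y) / normA A y |y. y \<in> RA \<and> y \<noteq> 0}"
    by (auto intro!: bdd_aboveI[of _ C])
  then have "normA A (R x) / normA A x \<le> opnormA A R"
    unfolding opnormA_def using assms(2) False by (intro cSup_upper) auto
  then show ?thesis using normA_pos_RA[OF assms(2) False] by (simp add: divide_le_eq mult.commute)
qed

lemma opnormA_le:
  assumes "\<exists>x\<in>RA. x \<noteq> 0" and "\<And>x. x \<in> RA \<Longrightarrow> normA A (R x) \<le> C * normA A x"
  shows "opnormA A R \<le> C"
  unfolding opnormA_def
proof (rule cSup_least)
  show "{normA A (R x) / normA A x |x. x \<in> RA \<and> x \<noteq> 0} \<noteq> {}" using assms(1) by blast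
  show "r \<le> C" if "r \<in> {normA A (R x) / normA A x |x. x \<in> RA \<and> x \<noteq> 0}" for r
    using that assms(2) normA_pos_RA by (auto simp: divide_le_eq)
qed

lemma normA_le_norm: "\<exists>L>0. \<forall>x. normA A x \<le> L * norm x"
proof -
  obtain K where K: "K > 0" "\<forall>x. norm (A x) \<le> norm x * K"
    using bounded_linear.pos_bounded[OF bounded_clinear_imp_bounded_linear[OF bounded_clinear_A]]
    by blast
  have "normA A x \<le> sqrt K * norm x" for x
  proof -
    have "(normA A x)\<^sup>2 \<le> cmod (cinner (A x) x)" by (simp add: normA_sq innerA_def complex_Re_le_cmod)
    also have "\<dots> \<le> norm (A x) * norm x" by (rule norm_cinner_le)
    also have "\<dots> \<le> (norm x * K) * norm x" using K by (intro mult_right_mono) auto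
    also have "\<dots> = (sqrt K * norm x)\<^sup>2" using K by (simp add: power2_eq_square)
    finally show ?thesis by (rule power2_le_imp_le) (use K in simp)
  qed
  then show ?thesis using K by (intro exI[of _ "sqrt K"]) auto
qed

lemma A_selfadjoint_funpow: "A_selfadjoint A R \<Longrightarrow> A_selfadjoint A (R ^^ n)"
  unfolding A_selfadjoint_def
proof (induction n)
  case 0
  then show ?case by simp
next
  case (Suc n)
  then show ?case by (metis funpow_simps_right(2) comp_apply funpow.simps(2))
qed

lemma A_selfadjoint_normA_sq_le:
  assumes "A_selfadjoint A R"
  shows "(normA A (R x))\<^sup>2 \<le> normA A (R (R x)) * normA A x"
proof -
  have "(normA A (R x))\<^sup>2 = Re (innerA A (R (R x)) x)"
    using assms by (simp add: normA_sq A_selfadjoint_def)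
  also have "\<dots> \<le> normA A (R (R x)) * normA A x"
    by (rule order_trans[OF complex_Re_le_cmod norm_innerA_le])
  finally show ?thesis .
qed

text \<open>Iterating Cauchy-Schwarz gives \<open>\<parallel>R x\<parallel>\<^sub>A ^ 2\<^sup>n \<le> \<parallel>R\<^sup>2\<^sup>n x\<parallel>\<^sub>A\<close> for A-unit x,
  while the right-hand side grows at most like \<open>K ^ 2\<^sup>n\<close>.\<close>

lemma A_selfadjoint_normA_le_on_unit:
  assumes R: "A_selfadjoint A R" and K: "\<And>x. norm (R x) \<le> norm x * K" "0 < K"
    and x: "normA A x = 1"
  shows "normA A (R x) \<le> K"
proof (rule ccontr)
  assume "\<not> normA A (R x) \<le> K"
  then have r: "1 < normA A (R x) / K" using K by (simp add: field_simps)
  obtain L where L: "L > 0" "\<And>y. normA A y \<le> L * norm y" using normA_le_norm by blast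
  have pow: "normA A (R x) ^ (2 ^ n) \<le> normA A ((R ^^ (2 ^ n)) x)" for n
  proof (induction n)
    case 0
    then show ?case by simp
  next
    case (Suc n)
    have "normA A (R x) ^ (2 ^ Suc n) = (normA A (R x) ^ (2 ^ n))\<^sup>2"
      by (simp add: power_mult[symmetric] mult.commute)
    also have "\<dots> \<le> (normA A ((R ^^ (2 ^ n)) x))\<^sup>2"
      using Suc normA_nonneg by (intro power_mono) auto
    also have "\<dots> \<le> normA A ((R ^^ (2 ^ n)) ((R ^^ (2 ^ n)) x))"
      using A_selfadjoint_normA_sq_le[OF A_selfadjoint_funpow[OF R, of "2 ^ n"], of x] x by simp
    also have "(R ^^ (2 ^ n)) ((R ^^ (2 ^ n)) x) = (R ^^ (2 ^ Suc n)) x"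
      by (simp only: power_Suc mult_2 funpow_add comp_apply)
    finally show ?case .
  qed
  obtain n where n: "L * norm x < (normA A (R x) / K) ^ n" using real_arch_pow[OF r] by blast
  have "(normA A (R x) / K) ^ n \<le> (normA A (R x) / K) ^ (2 ^ n)"
    using r by (intro power_increasing) (auto intro: less_imp_le simp: less_exp)
  also have "\<dots> \<le> normA A ((R ^^ (2 ^ n)) x) / K ^ (2 ^ n)"
    using pow[of n] K by (simp add: power_divide divide_right_mono)
  also have "\<dots> \<le> L * norm ((R ^^ (2 ^ n)) x) / K ^ (2 ^ n)"
    using L(2) K by (intro divide_right_mono) auto
  also have "\<dots> \<le> L * (K ^ (2 ^ n) * norm x) / K ^ (2 ^ n)"
    using funpow_norm_le[of R K "2 ^ n" x] K L by (intro divide_right_mono mult_left_mono) auto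
  also have "\<dots> = L * norm x" using K by simp
  finally show False using n by simp
qed

lemma A_selfadjoint_A_bounded:
  assumes R: "bounded_linear R" and "A_selfadjoint A R"
  shows "\<exists>C\<ge>0. \<forall>x. normA A (R x) \<le> C * normA A x"
proof -
  obtain K where K: "K > 0" "\<And>x. norm (R x) \<le> norm x * K"
    using bounded_linear.pos_bounded[OF R] by blast
  have "normA A (R x) \<le> K * normA A x" for x
  proof (cases "normA A x = 0")
    case True
    then have "normA A (R x) = 0"
      using A_selfadjoint_normA_sq_le[OF assms(2), of x] normA_nonneg by simp
    then show ?thesis using True by simp
  next
    case False
    have "normA A (R ((1 / normA A x) *\<^sub>R x)) \<le> K"
      by (rule A_selfadjoint_normA_le_on_unit[OF assms(2) K(2) K(1) normA_normalize[OF False]])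
    moreover have "R ((1 / normA A x) *\<^sub>R x) = (1 / normA A x) *\<^sub>R R x"
      by (rule linear_scale[OF bounded_linear.linear[OF R]])
    moreover have x: "0 < normA A x" using False normA_nonneg[of x] by simp
    ultimately have "normA A (R x) / normA A x \<le> K" by (simp add: normA_scaleR)
    then show ?thesis using x by (simp add: pos_divide_le_eq mult.commute)
  qed
  then show ?thesis using K by (intro exI[of _ K]) auto
qed

text \<open>Polarization bounds \<open>Re \<langle>R z, v\<rangle>\<^sub>A\<close>; then take \<open>v = t R z\<close> and optimize in t.\<close>

lemma A_selfadjoint_normA_le:
  assumes add: "\<And>u v. R (u + v) = R u + R v" and R: "A_selfadjoint A R" and "0 \<le> w"
    and bound: "\<And>u. cmod (innerA A (R u) u) \<le> w * (normA A u)\<^sup>2"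
  shows "normA A (R z) \<le> w * normA A z"
proof -
  have diff: "R (u - v) = R u - R v" for u v
    using add[of "u - v" v] by (simp add: eq_diff_eq)
  have polar: "2 * Re (innerA A (R z) v) \<le> w * ((normA A z)\<^sup>2 + (normA A v)\<^sup>2)" for v
  proof -
    have "innerA A (R v) z = cnj (innerA A (R z) v)"
      using R innerA_commute[of v "R z"] by (simp add: A_selfadjoint_def)
    then have "4 * Re (innerA A (R z) v)
        = Re (innerA A (R (z + v)) (z + v)) - Re (innerA A (R (z - v)) (z - v))"
      by (simp add: add diff innerA_add_left innerA_add_right innerA_diff_left innerA_diff_right)
    also have "\<dots> \<le> w * (normA A (z + v))\<^sup>2 + w * (normA A (z - v))\<^sup>2"
      using bound[of "z + v"] bound[of "z - v"]
        abs_Re_le_cmod[of "innerA A (R (z + v)) (z + v)"] abs_Re_le_cmod[of "innerA A (R (z - v)) (z - v)"]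
      by linarith
    also have "\<dots> = 2 * (w * ((normA A z)\<^sup>2 + (normA A v)\<^sup>2))"
      using innerA_commute[of v z] by (simp add: normA_add_sq normA_diff_sq algebra_simps)
    finally show ?thesis by simp
  qed
  have quadratic: "2 * t * (normA A (R z))\<^sup>2 \<le> w * ((normA A z)\<^sup>2 + t\<^sup>2 * (normA A (R z))\<^sup>2)"
    if "0 \<le> t" for t
  proof -
    have "innerA A (R z) (complex_of_real t *\<^sub>C R z) = complex_of_real (t * (normA A (R z))\<^sup>2)"
      by (simp add: innerA_scaleC_right innerA_self)
    moreover have "normA A (complex_of_real t *\<^sub>C R z) = t * normA A (R z)"
      using that by (simp add: normA_scaleC)
    ultimately show ?thesis
      using polar[of "complex_of_real t *\<^sub>C R z"] by (simp add: power_mult_distrib mult.assoc)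
  qed
  show ?thesis by (rule le_mult_if_quadratic_bound[OF normA_nonneg normA_nonneg \<open>0 \<le> w\<close> quadratic])
qed

lemma dim_range_ge2_RA_nonzero:
  assumes "dim_range_ge2 A"
  shows "\<exists>x\<in>RA. x \<noteq> 0"
proof -
  obtain a1 a2 where indep: "\<forall>a b. a *\<^sub>C A a1 + b *\<^sub>C A a2 = 0 \<longrightarrow> a = 0 \<and> b = 0"
    using assms unfolding dim_range_ge2_def by blast
  have "A a1 \<noteq> 0"
  proof
    assume "A a1 = 0"
    then have "1 *\<^sub>C A a1 + 0 *\<^sub>C A a2 = 0" by simp
    then show False using indep[rule_format, of 1 0] by simp
  qed
  then show ?thesis using A_in_RA by blast
qed

lemma exists_normA_eq_1:
  assumes "dim_range_ge2 A"
  shows "\<exists>u. normA A u = 1"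
proof -
  obtain x where "x \<in> RA" "x \<noteq> 0" using dim_range_ge2_RA_nonzero[OF assms] by blast
  then have "normA A x \<noteq> 0" using normA_pos_RA by fastforce
  then show ?thesis using normA_normalize by blast
qed

text \<open>If every \<open>w - \<langle>w, u\<rangle>\<^sub>A u\<close> had A-seminorm 0, then \<open>A w = \<langle>w, u\<rangle>\<^sub>A A u\<close> for all w,
  so R(A) would be spanned by A u.\<close>

lemma exists_A_orthonormal:
  assumes "dim_range_ge2 A" and u: "normA A u = 1"
  shows "\<exists>z. normA A z = 1 \<and> innerA A u z = 0"
proof -
  obtain a1 a2 where indep: "\<forall>a b. a *\<^sub>C A a1 + b *\<^sub>C A a2 = 0 \<longrightarrow> a = 0 \<and> b = 0"
    using assms unfolding dim_range_ge2_def by blast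
  define perp where "perp w = w - innerA A w u *\<^sub>C u" for w
  have perp_orth: "innerA A u (perp w) = 0" for w
    using u innerA_commute[of w u] by (simp add: perp_def innerA_simps innerA_self)
  have "\<exists>w. normA A (perp w) \<noteq> 0"
  proof (rule ccontr)
    assume "\<not> (\<exists>w. normA A (perp w) \<noteq> 0)"
    then have Aw: "A w = innerA A w u *\<^sub>C A u" for w
      using A_eq_0_if_normA_eq_0[of "perp w"]
      by (simp add: perp_def linear_diff[OF linear_A] bounded_clinear_scaleC[OF bounded_clinear_A])
    define c1 c2 where "c1 = innerA A (A a1) u" and "c2 = innerA A (A a2) u"
    have "A (c2 *\<^sub>C A a1 - c1 *\<^sub>C A a2) = 0"
      by (simp add: linear_diff[OF linear_A] bounded_clinear_scaleC[OF bounded_clinear_A]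
          Aw[of "A a1"] Aw[of "A a2"] c1_def c2_def scaleC_scaleC mult.commute)
    moreover have "c2 *\<^sub>C A a1 - c1 *\<^sub>C A a2 \<in> RA"
      using csubspace_RA A_in_RA by (intro csubspace_diff csubspace_scaleC)
    ultimately have "c2 *\<^sub>C A a1 - c1 *\<^sub>C A a2 = 0" by (rule RA_A_eq_0[rotated])
    then have "c2 *\<^sub>C A a1 + (- c1) *\<^sub>C A a2 = 0" by (simp add: scaleC_minus_left)
    then have "c1 = 0" using indep[rule_format, of c2 "- c1"] by simp
    then have "A (A a1) = 0" using Aw[of "A a1"] by (simp add: c1_def)
    then have "1 *\<^sub>C A a1 + 0 *\<^sub>C A a2 = 0" using RA_A_eq_0 A_in_RA by (simp add: scaleC_one)
    then show False using indep[rule_format, of 1 0] by simp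
  qed
  then obtain w where w: "normA A (perp w) \<noteq> 0" by blast
  show ?thesis
    using normA_normalize[OF w] perp_orth[of w]
    by (intro exI[of _ "(1 / normA A (perp w)) *\<^sub>R perp w"]) (simp add: scaleR_scaleC innerA_scaleC_right)
qed

lemma normA_innerA_q_combination:
  assumes u: "normA A u = 1" and z: "normA A z = 1" and uz: "innerA A u z = 0"
    and t: "t\<^sup>2 = 1 - (cmod q)\<^sup>2"
  shows "normA A (cnj q *\<^sub>C u + complex_of_real t *\<^sub>C z) = 1"
    and "innerA A u (cnj q *\<^sub>C u + complex_of_real t *\<^sub>C z) = q"
proof -
  have "(normA A (cnj q *\<^sub>C u + complex_of_real t *\<^sub>C z))\<^sup>2 = (cmod q)\<^sup>2 + t\<^sup>2"
    using u z uz by (simp add: normA_add_sq innerA_simps normA_scaleC power_mult_distrib)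
  then show "normA A (cnj q *\<^sub>C u + complex_of_real t *\<^sub>C z) = 1"
    using t normA_nonneg by (simp add: power2_eq_1_iff) (smt (verit))
  show "innerA A u (cnj q *\<^sub>C u + complex_of_real t *\<^sub>C z) = q"
    using u uz by (simp add: innerA_simps innerA_self)
qed

end

locale hilbert_positive_operator = positive_operator A for A :: "'a::chilbert_space \<Rightarrow> 'a"
begin

lemma A_cproj_RA: "A (cproj RA x) = A x"
proof -
  have "cinner (A (x - cproj RA x)) v = 0" for v
    using cproj_orthogonal[OF closed_closure csubspace_RA A_in_RA] by (simp add: cinner_A_commute)
  then have "A (x - cproj RA x) = 0" by (metis cinner_eq_zero_iff)
  then show ?thesis by (simp add: linear_diff[OF linear_A])
qed

lemma normA_cproj_RA: "normA A (cproj RA x) = normA A x"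
proof -
  have "innerA A (cproj RA x) (cproj RA x) = cnj (innerA A x x)"
    by (metis A_cproj_RA cinner_commute innerA_def cinner_A_commute)
  then show ?thesis by (simp add: normA_def)
qed

lemma A_comp_A_adjoint:
  assumes "bounded_clinear T" and "is_A_adjoint A T W"
  shows "A (W y) = hadjoint T (A y)"
proof (rule cinner_eqI)
  fix z
  have "cinner z (A (W y)) = innerA A z (W y)" by (simp add: innerA_def cinner_A_commute)
  also have "\<dots> = innerA A (T z) y" using assms(2) by (simp add: is_A_adjoint_def)
  also have "\<dots> = cinner (T z) (A y)" by (simp add: innerA_def cinner_A_commute)
  also have "\<dots> = cinner z (hadjoint T (A y))" by (rule cinner_hadjoint[OF assms(1)])
  finally show "cinner z (A (W y)) = cinner z (hadjoint T (A y))" .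
qed

lemma sharpA_eq_cproj:
  assumes "bounded_clinear T" and W: "bounded_clinear W" "is_A_adjoint A T W"
  shows "sharpA A T = (\<lambda>y. cproj RA (W y))"
  unfolding sharpA_def
proof (rule the_equality)
  show "bounded_clinear (\<lambda>y. cproj RA (W y)) \<and> A \<circ> (\<lambda>y. cproj RA (W y)) = hadjoint T \<circ> A
      \<and> range (\<lambda>y. cproj RA (W y)) \<subseteq> RA"
    using bounded_clinear_compose[OF bounded_clinear_cproj[OF closed_closure csubspace_RA] W(1)]
      cproj_in[OF closed_closure csubspace_RA] A_comp_A_adjoint[OF assms(1) W(2)]
    by (auto simp: A_cproj_RA)
  fix X
  assume X: "bounded_clinear X \<and> A \<circ> X = hadjoint T \<circ> A \<and> range X \<subseteq> RA"
  show "X = (\<lambda>y. cproj RA (W y))"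
  proof
    fix y
    have "A (X y - cproj RA (W y)) = 0"
      using X A_comp_A_adjoint[OF assms(1) W(2)]
      by (simp add: linear_diff[OF linear_A] A_cproj_RA fun_eq_iff)
    moreover have "X y - cproj RA (W y) \<in> RA"
      using X cproj_in[OF closed_closure csubspace_RA] by (intro csubspace_diff[OF csubspace_RA]) auto
    ultimately show "X y = cproj RA (W y)" using RA_A_eq_0 by fastforce
  qed
qed

lemma
  assumes "T \<in> BA A"
  shows bounded_clinear_sharpA: "bounded_clinear (sharpA A T)"
    and innerA_sharpA: "innerA A (T x) y = innerA A x (sharpA A T y)"
proof -
  obtain W where W: "bounded_clinear W" "is_A_adjoint A T W" and T: "bounded_clinear T"
    using assms by (auto simp: BA_def)
  show "bounded_clinear (sharpA A T)"
    unfolding sharpA_eq_cproj[OF T W]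
    by (rule bounded_clinear_compose[OF bounded_clinear_cproj[OF closed_closure csubspace_RA] W(1)])
  have "innerA A x (cproj RA (W y)) = innerA A x (W y)"
    by (simp add: innerA_def cinner_A_commute A_cproj_RA)
  then show "innerA A (T x) y = innerA A x (sharpA A T y)"
    using W(2) by (simp add: sharpA_eq_cproj[OF T W] is_A_adjoint_def)
qed

end

section \<open>The A-q-numerical radius\<close>

lemma upper_estimate_arith:
  fixes c s m a b N X :: real
  assumes "0 \<le> c" "0 \<le> s" "s\<^sup>2 = 1 - c\<^sup>2" and "0 \<le> m" "m \<le> a" "m \<le> b" "a\<^sup>2 + b\<^sup>2 \<le> N"
    and "0 \<le> X" "X \<le> c * m + s * a"
  shows "X\<^sup>2 \<le> (2 - c\<^sup>2 + 4 * c * s) / 2 * N"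
proof -
  have "m * m \<le> a * b" using assms by (intro mult_mono) auto
  also have "a * b \<le> (a\<^sup>2 + b\<^sup>2) / 2" using sum_squares_bound[of a b] by (simp add: algebra_simps)
  also have "\<dots> \<le> N / 2" using assms(7) by simp
  finally have mm: "m * m \<le> N / 2" .
  have aa: "a\<^sup>2 \<le> N" using assms(7) zero_le_power2[of b] by linarith
  have "m * a \<le> a * a" using assms by (intro mult_right_mono) auto
  then have ma: "m * a \<le> N" using aa by (simp add: power2_eq_square)
  have "c\<^sup>2 \<le> 1" using assms(3) zero_le_power2[of s] by linarith
  have "X\<^sup>2 \<le> (c * m + s * a)\<^sup>2" using assms by (intro power_mono) auto
  also have "\<dots> = c\<^sup>2 * (m * m) + 2 * c * s * (m * a) + s\<^sup>2 * a\<^sup>2"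
    by (simp add: power2_eq_square algebra_simps)
  also have "\<dots> \<le> c\<^sup>2 * (N / 2) + 2 * c * s * N + s\<^sup>2 * N"
    using assms mm ma aa \<open>c\<^sup>2 \<le> 1\<close> by (intro add_mono mult_left_mono) auto
  also have "\<dots> = (2 - c\<^sup>2 + 4 * c * s) / 2 * N" unfolding assms(3) by (simp add: field_simps)
  finally show ?thesis .
qed

locale A_adjointable = hilbert_positive_operator +
  fixes T :: "'a \<Rightarrow> 'a"
  assumes T_in_BA: "T \<in> BA A"
begin

abbreviation Tsharp :: "'a \<Rightarrow> 'a" where
  "Tsharp \<equiv> sharpA A T"

definition S :: "'a \<Rightarrow> 'a" where
  "S x = Tsharp (T x) + T (Tsharp x)"

definition ReT :: "'a \<Rightarrow> 'a" where
  "ReT x = (1 / 2) *\<^sub>C (T x + Tsharp x)"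

definition ImT :: "'a \<Rightarrow> 'a" where
  "ImT x = (- \<i> / 2) *\<^sub>C (T x - Tsharp x)"

lemma bounded_linear_T: "bounded_linear T"
  using T_in_BA by (simp add: BA_def bounded_clinear_imp_bounded_linear)

lemma bounded_linear_Tsharp: "bounded_linear Tsharp"
  by (rule bounded_clinear_imp_bounded_linear[OF bounded_clinear_sharpA[OF T_in_BA]])

lemma innerA_T_left: "innerA A (T x) y = innerA A x (Tsharp y)"
  by (rule innerA_sharpA[OF T_in_BA])

lemma innerA_Tsharp_left: "innerA A (Tsharp x) y = innerA A x (T y)"
  by (metis innerA_T_left innerA_commute)

lemma A_selfadjoint_S: "A_selfadjoint A S"
  by (simp add: A_selfadjoint_def S_def innerA_add_left innerA_add_right innerA_T_left
      innerA_Tsharp_left)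

lemma bounded_linear_S: "bounded_linear S"
  unfolding S_def [abs_def]
  by (rule bounded_linear_add[OF bounded_linear_compose[OF bounded_linear_Tsharp bounded_linear_T]
        bounded_linear_compose[OF bounded_linear_T bounded_linear_Tsharp]])

text \<open>Projecting x onto \<open>\<overline>R(A)\<close> changes neither side, so the supremum over \<open>\<overline>R(A)\<close>
  defining \<open>\<parallel>S\<parallel>\<^sub>A\<close> applies.\<close>

lemma normA_T_sq_add_normA_Tsharp_sq_le:
  "(normA A (T x))\<^sup>2 + (normA A (Tsharp x))\<^sup>2 \<le> opnormA A S * (normA A x)\<^sup>2"
proof -
  obtain C where C: "\<And>x. normA A (S x) \<le> C * normA A x"
    using A_selfadjoint_A_bounded[OF bounded_linear_S A_selfadjoint_S] by blast
  define p where "p = cproj RA x"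
  have "innerA A (S x) x = cinner (S x) (A p)" by (simp add: innerA_def cinner_A_commute A_cproj_RA p_def)
  also have "\<dots> = innerA A (S x) p" by (simp add: innerA_def cinner_A_commute)
  also have "\<dots> = innerA A x (S p)" using A_selfadjoint_S by (simp add: A_selfadjoint_def)
  also have "\<dots> = innerA A p (S p)" by (simp add: innerA_def A_cproj_RA p_def)
  finally have Sx: "innerA A (S x) x = innerA A p (S p)" .
  have "(normA A (T x))\<^sup>2 + (normA A (Tsharp x))\<^sup>2 = Re (innerA A (S x) x)"
    by (simp add: S_def innerA_add_left innerA_T_left innerA_Tsharp_left normA_sq)
  also have "\<dots> \<le> normA A p * normA A (S p)"
    unfolding Sx by (rule order_trans[OF complex_Re_le_cmod norm_innerA_le])
  also have "\<dots> \<le> normA A p * (opnormA A S * normA A p)"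
    using normA_le_opnormA[OF C] cproj_in[OF closed_closure csubspace_RA]
    by (intro mult_left_mono normA_nonneg) (simp add: p_def)
  also have "\<dots> = opnormA A S * (normA A x)\<^sup>2"
    by (simp add: p_def normA_cproj_RA power2_eq_square)
  finally show ?thesis .
qed

lemma A_selfadjoint_ReT: "A_selfadjoint A ReT"
  by (simp add: A_selfadjoint_def ReT_def innerA_simps innerA_T_left innerA_Tsharp_left)

lemma A_selfadjoint_ImT: "A_selfadjoint A ImT"
  by (simp add: A_selfadjoint_def ImT_def innerA_simps innerA_T_left innerA_Tsharp_left
      algebra_simps)

lemma ReT_add: "ReT (x + y) = ReT x + ReT y"
  by (simp add: ReT_def linear_add[OF bounded_linear.linear[OF bounded_linear_T]]
      linear_add[OF bounded_linear.linear[OF bounded_linear_Tsharp]] scaleC_add_right[symmetric]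
      algebra_simps)

lemma ImT_add: "ImT (x + y) = ImT x + ImT y"
  by (simp add: ImT_def linear_add[OF bounded_linear.linear[OF bounded_linear_T]]
      linear_add[OF bounded_linear.linear[OF bounded_linear_Tsharp]] scaleC_add_right[symmetric]
      algebra_simps)

lemma innerA_ReT_self: "innerA A (ReT u) u = complex_of_real (Re (innerA A (T u) u))"
proof -
  have "innerA A (ReT u) u = (1 / 2) * (innerA A (T u) u + cnj (innerA A (T u) u))"
    by (simp add: ReT_def innerA_scaleC_left innerA_add_left innerA_Tsharp_left
        innerA_commute[of u "T u"])
  then show ?thesis by (simp add: complex_add_cnj)
qed

lemma innerA_ImT_self: "innerA A (ImT u) u = complex_of_real (Im (innerA A (T u) u))"
proof -
  have "innerA A (ImT u) u = (- \<i> / 2) * (innerA A (T u) u - cnj (innerA A (T u) u))"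
    by (simp add: ImT_def innerA_scaleC_left innerA_diff_left innerA_Tsharp_left
        innerA_commute[of u "T u"])
  then show ?thesis by (simp add: complex_diff_cnj field_simps)
qed

lemma innerA_S: "innerA A (S p) y = 2 * (innerA A (ReT p) (ReT y) + innerA A (ImT p) (ImT y))"
proof -
  have c1: "(1 / 2 :: complex) * cnj (1 / 2) = 1 / 4" by simp
  have c2: "(- \<i> / 2) * cnj (- \<i> / 2) = 1 / 4" by (simp add: field_simps)
  show ?thesis
    unfolding ReT_def ImT_def innerA_scaleC_left innerA_scaleC_right mult.assoc[symmetric] c1 c2
    by (simp add: S_def innerA_simps innerA_T_left innerA_Tsharp_left field_simps)
qed

lemma normA_S_le_numerical_range_bound:
  assumes "0 \<le> w" and w: "\<And>u. cmod (innerA A (T u) u) \<le> w * (normA A u)\<^sup>2"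
  shows "normA A (S p) \<le> 4 * w\<^sup>2 * normA A p"
proof -
  have ReT_le: "normA A (ReT z) \<le> w * normA A z" for z
  proof (rule A_selfadjoint_normA_le[OF ReT_add A_selfadjoint_ReT \<open>0 \<le> w\<close>])
    show "cmod (innerA A (ReT u) u) \<le> w * (normA A u)\<^sup>2" for u
      using abs_Re_le_cmod w order_trans by (simp add: innerA_ReT_self) blast
  qed
  have ImT_le: "normA A (ImT z) \<le> w * normA A z" for z
  proof (rule A_selfadjoint_normA_le[OF ImT_add A_selfadjoint_ImT \<open>0 \<le> w\<close>])
    show "cmod (innerA A (ImT u) u) \<le> w * (normA A u)\<^sup>2" for u
      using abs_Im_le_cmod w order_trans by (simp add: innerA_ImT_self) blast
  qed
  define a c where "a = normA A p" and "c = normA A (S p)"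
  have "c\<^sup>2 = 2 * (Re (innerA A (ReT p) (ReT (S p))) + Re (innerA A (ImT p) (ImT (S p))))"
    by (simp add: c_def normA_sq innerA_S)
  also have "\<dots> \<le> 2 * (normA A (ReT p) * normA A (ReT (S p)) + normA A (ImT p) * normA A (ImT (S p)))"
    using order_trans[OF complex_Re_le_cmod norm_innerA_le] by (intro mult_left_mono add_mono) auto
  also have "\<dots> \<le> 2 * ((w * a) * (w * c) + (w * a) * (w * c))"
    using ReT_le ImT_le normA_nonneg \<open>0 \<le> w\<close> unfolding a_def c_def
    by (intro mult_left_mono add_mono mult_mono) auto
  also have "\<dots> = (4 * w\<^sup>2 * a) * c" by (simp add: power2_eq_square algebra_simps)
  finally have "c * c \<le> (4 * w\<^sup>2 * a) * c" by (simp add: power2_eq_square)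
  then show ?thesis
    using normA_nonneg[of "S p"] normA_nonneg[of p] unfolding a_def c_def
    by (metis less_eq_real_def mult_le_cancel_right mult_nonneg_nonneg zero_le_numeral zero_le_power2)
qed

lemma bdd_above_wqA:
  "bdd_above {cmod (innerA A (T x) y) | x y. normA A x = 1 \<and> normA A y = 1 \<and> innerA A x y = q}"
proof (rule bdd_aboveI)
  fix r
  assume "r \<in> {cmod (innerA A (T x) y) | x y. normA A x = 1 \<and> normA A y = 1 \<and> innerA A x y = q}"
  then obtain x y where r: "r = cmod (innerA A (T x) y)" and x: "normA A x = 1" and y: "normA A y = 1"
    by blast
  have "(normA A (T x))\<^sup>2 + (normA A (Tsharp x))\<^sup>2 \<le> opnormA A S"
    using normA_T_sq_add_normA_Tsharp_sq_le[of x] x by simp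
  then have "(normA A (T x))\<^sup>2 \<le> opnormA A S" using zero_le_power2[of "normA A (Tsharp x)"] by linarith
  then have "normA A (T x) \<le> sqrt (opnormA A S)" by (simp add: real_le_rsqrt)
  then show "r \<le> sqrt (opnormA A S)" using norm_innerA_le[of "T x" y] y r by simp
qed

lemma norm_innerA_T_sq_le:
  assumes x: "normA A x = 1" and y: "normA A y = 1" and xy: "innerA A x y = q"
  shows "(cmod (innerA A (T x) y))\<^sup>2
    \<le> (2 - (cmod q)\<^sup>2 + 4 * cmod q * sqrt (1 - (cmod q)\<^sup>2)) / 2 * opnormA A S"
proof -
  define r where "r = y - cnj q *\<^sub>C x"
  have yx: "innerA A y x = cnj q" using xy innerA_commute[of y x] by simp
  have "(normA A r)\<^sup>2 = 1 - 2 * Re (q * cnj q) + (cmod q)\<^sup>2"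
    unfolding r_def normA_diff_sq using x y yx by (simp add: innerA_scaleC_right normA_scaleC)
  also have "Re (q * cnj q) = (cmod q)\<^sup>2" by (simp flip: complex_norm_square)
  finally have r_sq: "(normA A r)\<^sup>2 = 1 - (cmod q)\<^sup>2" by simp
  then have r_norm: "normA A r = sqrt (1 - (cmod q)\<^sup>2)" using normA_nonneg by (simp add: real_sqrt_unique)
  have "innerA A (T x) y = q * innerA A (T x) x + innerA A (T x) r"
    by (simp add: r_def innerA_simps)
  then have "cmod (innerA A (T x) y) \<le> cmod q * cmod (innerA A (T x) x) + cmod (innerA A (T x) r)"
    by (metis norm_mult norm_triangle_ineq)
  also have "\<dots> \<le> cmod q * cmod (innerA A (T x) x) + sqrt (1 - (cmod q)\<^sup>2) * normA A (T x)"
    using norm_innerA_le[of "T x" r] by (simp add: r_norm mult.commute)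
  finally have bound: "cmod (innerA A (T x) y)
      \<le> cmod q * cmod (innerA A (T x) x) + sqrt (1 - (cmod q)\<^sup>2) * normA A (T x)" .
  show ?thesis
  proof (rule upper_estimate_arith[OF _ _ _ _ _ _ _ _ bound])
    show "(sqrt (1 - (cmod q)\<^sup>2))\<^sup>2 = 1 - (cmod q)\<^sup>2" using r_sq r_norm by simp
    show "cmod (innerA A (T x) x) \<le> normA A (T x)" using norm_innerA_le[of "T x" x] x by simp
    show "cmod (innerA A (T x) x) \<le> normA A (Tsharp x)"
      using norm_innerA_le[of x "Tsharp x"] x by (simp add: innerA_T_left)
    show "(normA A (T x))\<^sup>2 + (normA A (Tsharp x))\<^sup>2 \<le> opnormA A S"
      using normA_T_sq_add_normA_Tsharp_sq_le[of x] x by simp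
  qed (auto simp: r_norm[symmetric] normA_nonneg)
qed

lemma norm_innerA_le_wqA:
  assumes "normA A x = 1" and "normA A y = 1" and "innerA A x y = q"
  shows "cmod (innerA A (T x) y) \<le> wqA q A T"
  unfolding wqA_def using assms by (intro cSup_upper bdd_above_wqA) auto

context
  fixes q :: complex
  assumes dim: "dim_range_ge2 A" and q_pos: "0 < cmod q" and q_le_1: "cmod q \<le> 1"
begin

lemma sqrt_1_minus_q_sq: "(sqrt (1 - (cmod q)\<^sup>2))\<^sup>2 = 1 - (cmod q)\<^sup>2"
  using q_le_1 by (simp add: power_le_one)

lemma wqA_feasible: "\<exists>x y. normA A x = 1 \<and> normA A y = 1 \<and> innerA A x y = q"
proof -
  obtain u where u: "normA A u = 1" using exists_normA_eq_1[OF dim] by blast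
  obtain z where "normA A z = 1" "innerA A u z = 0" using exists_A_orthonormal[OF dim u] by blast
  then show ?thesis using normA_innerA_q_combination[OF u _ _ sqrt_1_minus_q_sq] u by blast
qed

lemma wqA_nonneg: "0 \<le> wqA q A T"
  using wqA_feasible norm_innerA_le_wqA order_trans norm_ge_zero by metis

lemma wqA_le:
  assumes "\<And>x y. normA A x = 1 \<Longrightarrow> normA A y = 1 \<Longrightarrow> innerA A x y = q \<Longrightarrow>
    cmod (innerA A (T x) y) \<le> B"
  shows "wqA q A T \<le> B"
  unfolding wqA_def using wqA_feasible assms by (intro cSup_least) auto

lemma norm_innerA_T_unit_le_wqA:
  assumes u: "normA A u = 1"
  shows "cmod q * cmod (innerA A (T u) u) \<le> wqA q A T"
proof -
  obtain z where z: "normA A z = 1" "innerA A u z = 0" using exists_A_orthonormal[OF dim u] by blast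
  define t where "t = sqrt (1 - (cmod q)\<^sup>2)"
  define \<alpha> \<beta> where "\<alpha> = q * innerA A (T u) u" and "\<beta> = complex_of_real t * innerA A (T u) z"
  have "cmod (innerA A (T u) (cnj q *\<^sub>C u + complex_of_real s *\<^sub>C z)) \<le> wqA q A T"
    if "s\<^sup>2 = 1 - (cmod q)\<^sup>2" for s
    using normA_innerA_q_combination[OF u z that] u by (intro norm_innerA_le_wqA) auto
  from this[of t] this[of "- t"] have "cmod (\<alpha> + \<beta>) \<le> wqA q A T" "cmod (\<alpha> - \<beta>) \<le> wqA q A T"
    using sqrt_1_minus_q_sq by (simp_all add: t_def \<alpha>_def \<beta>_def innerA_simps)
  moreover have "2 * cmod \<alpha> \<le> cmod (\<alpha> + \<beta>) + cmod (\<alpha> - \<beta>)"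
    using norm_triangle_ineq[of "\<alpha> + \<beta>" "\<alpha> - \<beta>"] by (simp add: norm_mult[symmetric])
  ultimately show ?thesis by (simp add: \<alpha>_def norm_mult)
qed

lemma norm_innerA_T_self_le_wqA:
  "cmod q * cmod (innerA A (T u) u) \<le> wqA q A T * (normA A u)\<^sup>2"
proof (cases "normA A u = 0")
  case True
  then show ?thesis using norm_innerA_le[of "T u" u] wqA_nonneg by simp
next
  case False
  define n where "n = normA A u"
  have n: "0 < n" using False normA_nonneg[of u] by (simp add: n_def)
  have "T ((1 / n) *\<^sub>R u) = (1 / n) *\<^sub>R T u"
    by (rule linear_scale[OF bounded_linear.linear[OF bounded_linear_T]])
  then have "innerA A (T ((1 / n) *\<^sub>R u)) ((1 / n) *\<^sub>R u) = complex_of_real (1 / n\<^sup>2) * innerA A (T u) u"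
    by (simp add: scaleR_scaleC innerA_simps power2_eq_square)
  then have "cmod q * (cmod (innerA A (T u) u) / n\<^sup>2) \<le> wqA q A T"
    using norm_innerA_T_unit_le_wqA[OF normA_normalize[OF False]] n
    by (simp add: n_def norm_mult norm_divide norm_power)
  then show ?thesis using n by (simp add: n_def field_simps)
qed

lemma opnormA_S_le_wqA: "(cmod q)\<^sup>2 / 4 * opnormA A S \<le> (wqA q A T)\<^sup>2"
proof -
  define w where "w = wqA q A T / cmod q"
  have "0 \<le> w" using wqA_nonneg q_pos by (simp add: w_def)
  moreover have "cmod (innerA A (T u) u) \<le> w * (normA A u)\<^sup>2" for u
    using norm_innerA_T_self_le_wqA[of u] q_pos by (simp add: w_def field_simps)
  ultimately have "opnormA A S \<le> 4 * w\<^sup>2"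
    by (intro opnormA_le[OF dim_range_ge2_RA_nonzero[OF dim]] normA_S_le_numerical_range_bound)
  then have "(cmod q)\<^sup>2 / 4 * opnormA A S \<le> (cmod q)\<^sup>2 / 4 * (4 * w\<^sup>2)"
    by (intro mult_left_mono) auto
  also have "\<dots> = (wqA q A T)\<^sup>2" using q_pos by (simp add: w_def power_divide)
  finally show ?thesis .
qed

lemma wqA_sq_le_opnormA_S:
  "(wqA q A T)\<^sup>2 \<le> (2 - (cmod q)\<^sup>2 + 4 * cmod q * sqrt (1 - (cmod q)\<^sup>2)) / 2 * opnormA A S"
    (is "_ \<le> ?B")
proof -
  have "0 \<le> ?B" using wqA_feasible norm_innerA_T_sq_le by (meson order_trans zero_le_power2)
  have "wqA q A T \<le> sqrt ?B"
    using norm_innerA_T_sq_le by (intro wqA_le real_le_rsqrt)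
  then have "(wqA q A T)\<^sup>2 \<le> (sqrt ?B)\<^sup>2" using wqA_nonneg by (intro power_mono)
  then show ?thesis using \<open>0 \<le> ?B\<close> by simp
qed

end

end

theorem mainTheorem1:
  fixes A T :: "'a::chilbert_space \<Rightarrow> 'a" and q :: complex
  assumes "positive_op A"
    and "dim_range_ge2 A"
    and "T \<in> BA A"
    and "0 < cmod q" and "cmod q \<le> 1"
  shows "(cmod q)\<^sup>2 / 4 * opnormA A (\<lambda>x. sharpA A T (T x) + T (sharpA A T x)) \<le> (wqA q A T)\<^sup>2
       \<and> (wqA q A T)\<^sup>2 \<le> (2 - (cmod q)\<^sup>2 + 4 * cmod q * sqrt (1 - (cmod q)\<^sup>2)) / 2
            * opnormA A (\<lambda>x. T (sharpA A T x) + sharpA A T (T x))"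
proof -
  interpret A_adjointable A T
    using assms(1,3) by unfold_locales auto
  have "(\<lambda>x. sharpA A T (T x) + T (sharpA A T x)) = S"
    and "(\<lambda>x. T (sharpA A T x) + sharpA A T (T x)) = S"
    by (auto simp: S_def add.commute)
  then show ?thesis
    using opnormA_S_le_wqA[OF assms(2,4,5)] wqA_sq_le_opnormA_S[OF assms(2,4,5)] by simp
qed

end
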